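(* Let $\mathcal X$ be a finite abelian group, $\mathcal Z$ a finite set, $P_{XZ}$ a distribution on $\mathcal X\times\mathcal Z$ and $W_{XZ|X}(x,z|x'):=P_{XZ}(x-x',z)$. For any finite set $\mathcal M$, distribution $P_M$ on $\mathcal M$, distribution $Q_Z$ on $\mathcal Z$ and constant $c>0$, \[ P_{js}(P_M,W_{XZ|X})\ge\sum_{\substack{(m,x,z):\\ P_M(m)P_{XZ}(x,z)\le \frac{c}{|\mathcal X|}Q_Z(z)}}P_M(m)P_{XZ}(x,z)\;-\;c. \]
   Context: A code $\phi=(\mathsf e,\mathsf d)$ consists of $\mathsf e:\mathcal M\to\mathcal X$ and $\mathsf d:\mathcal X\times\mathcal Z\to\mathcal M$; $P_{js}[\phi|P_M,W]:=\sum_mP_M(m)W(\{y:\mathsf d(y)\ne m\}|\mathsf e(m))$, and $P_{js}(P_M,W):=\inf_\phi P_{js}[\phi|P_M,W]$. *)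

theory Defs
  imports Complex_Main
begin

definition is_dist :: "('a::finite \<Rightarrow> real) \<Rightarrow> bool" where
  "is_dist P \<longleftrightarrow> (\<forall>a. 0 \<le> P a) \<and> (\<Sum>a\<in>UNIV. P a) = 1"

text \<open>Error probability of the code (e, d) for source distribution PM over channel W,
  where W x y is the probability of output y given input x.\<close>
definition Pjs_code ::
  "('m::finite \<Rightarrow> real) \<Rightarrow> ('m \<Rightarrow> 'x) \<Rightarrow> ('y::finite \<Rightarrow> 'm) \<Rightarrow> ('x \<Rightarrow> 'y \<Rightarrow> real) \<Rightarrow> real" where
  "Pjs_code PM e d W = (\<Sum>m\<in>UNIV. PM m * (\<Sum>y\<in>{y. d y \<noteq> m}. W (e m) y))"

definition Pjs ::
  "('m::finite \<Rightarrow> real) \<Rightarrow> ('x \<Rightarrow> 'y::finite \<Rightarrow> real) \<Rightarrow> real" where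
  "Pjs PM W = (INF ed \<in> (UNIV :: (('m \<Rightarrow> 'x) \<times> ('y \<Rightarrow> 'm)) set). Pjs_code PM (fst ed) (snd ed) W)"

end

theory Submission
  imports Defs
begin

text \<open>For a fixed code, every pair (m, y) with PM m * W (e m) y \<le> K * Q y either is decoded
  wrongly, and then it contributes to the error probability, or is decoded as m, which for each
  output y happens for exactly one message and costs at most K * Q y.  Over the additive channel
  the output distribution QZ z / |X| on X \<times> Z makes the threshold condition invariant under the
  shift x \<mapsto> x - e m, so the bound no longer depends on the code.\<close>

lemma sum_UNIV_prod:
  fixes g :: "'a::finite \<times> 'b::finite \<Rightarrow> 'c::comm_monoid_add"
  shows "(\<Sum>p\<in>UNIV. g p) = (\<Sum>a\<in>UNIV. \<Sum>b\<in>UNIV. g (a, b))"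
  by (subst UNIV_Times_UNIV[symmetric], subst sum.cartesian_product') (rule refl)

lemma sum_filter_UNIV_prod:
  fixes f :: "'a::finite \<Rightarrow> 'b::finite \<Rightarrow> 'c::comm_monoid_add"
  shows "(\<Sum>(a, b) \<in> {(a, b). P a b}. f a b) = (\<Sum>a\<in>UNIV. \<Sum>b\<in>UNIV. if P a b then f a b else 0)"
proof -
  have "(\<Sum>(a, b) \<in> {(a, b). P a b}. f a b) = (\<Sum>(a, b)\<in>UNIV. if P a b then f a b else 0)"
    by (simp add: sum.inter_filter[symmetric] case_prod_unfold)
  then show ?thesis
    by (simp add: sum_UNIV_prod)
qed

lemma Pjs_code_ge_low_likelihood_mass:
  fixes PM :: "'m::finite \<Rightarrow> real" and W :: "'x \<Rightarrow> 'y::finite \<Rightarrow> real" and Q :: "'y \<Rightarrow> real"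
  assumes PM: "\<And>m. PM m \<ge> 0" and W: "\<And>x y. W x y \<ge> 0" and Q: "\<And>y. Q y \<ge> 0" and "K \<ge> 0"
  shows "(\<Sum>(m, y) \<in> {(m, y). PM m * W (e m) y \<le> K * Q y}. PM m * W (e m) y)
           \<le> Pjs_code PM e d W + K * (\<Sum>y\<in>UNIV. Q y)"
proof -
  have "(\<Sum>(m, y) \<in> {(m, y). PM m * W (e m) y \<le> K * Q y}. PM m * W (e m) y)
      = (\<Sum>m\<in>UNIV. \<Sum>y\<in>UNIV. if PM m * W (e m) y \<le> K * Q y then PM m * W (e m) y else 0)"
    by (rule sum_filter_UNIV_prod)
  also have "\<dots> \<le> (\<Sum>m\<in>UNIV. \<Sum>y\<in>UNIV.
                    (if d y \<noteq> m then PM m * W (e m) y else 0) + (if d y = m then K * Q y else 0))"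
    by (intro sum_mono) (use PM W Q \<open>K \<ge> 0\<close> in \<open>auto intro: mult_nonneg_nonneg\<close>)
  also have "\<dots> = (\<Sum>m\<in>UNIV. \<Sum>y\<in>UNIV. if d y \<noteq> m then PM m * W (e m) y else 0)
                  + (\<Sum>m\<in>UNIV. \<Sum>y\<in>UNIV. if d y = m then K * Q y else 0)"
    by (simp only: sum.distrib)
  also have "(\<Sum>m\<in>UNIV. \<Sum>y\<in>UNIV. if d y \<noteq> m then PM m * W (e m) y else 0) = Pjs_code PM e d W"
    unfolding Pjs_code_def by (simp add: sum.inter_filter[symmetric] sum_distrib_left)
  also have "(\<Sum>m\<in>UNIV. \<Sum>y\<in>UNIV. if d y = m then K * Q y else 0) = K * (\<Sum>y\<in>UNIV. Q y)"
    by (subst sum.swap) (simp add: sum_distrib_left)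
  finally show ?thesis .
qed

lemma sum_UNIV_shift_fst:
  fixes g :: "'x::{ab_group_add, finite} \<times> 'z::finite \<Rightarrow> 'c::comm_monoid_add"
  shows "(\<Sum>y\<in>UNIV. g (fst y - a, snd y)) = (\<Sum>y\<in>UNIV. g y)"
  by (rule sum.reindex_bij_witness[where i = "\<lambda>y. (fst y + a, snd y)" and j = "\<lambda>y. (fst y - a, snd y)"])
     auto

lemma low_likelihood_mass_additive_channel:
  fixes PXZ :: "('x::{ab_group_add, finite} \<times> 'z::finite) \<Rightarrow> real"
    and PM :: "'m::finite \<Rightarrow> real" and QZ :: "'z \<Rightarrow> real" and e :: "'m \<Rightarrow> 'x"
  shows "(\<Sum>(m, y) \<in> {(m, y). PM m * PXZ (fst y - e m, snd y) \<le> K * QZ (snd y)}.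
            PM m * PXZ (fst y - e m, snd y))
       = (\<Sum>(m, x, z) \<in> {(m, x, z). PM m * PXZ (x, z) \<le> K * QZ z}. PM m * PXZ (x, z))"
proof -
  have "(\<Sum>y\<in>UNIV. if PM m * PXZ (fst y - e m, snd y) \<le> K * QZ (snd y)
                     then PM m * PXZ (fst y - e m, snd y) else 0)
      = (\<Sum>y\<in>UNIV. if PM m * PXZ y \<le> K * QZ (snd y) then PM m * PXZ y else 0)" for m
    using sum_UNIV_shift_fst[of "\<lambda>y. if PM m * PXZ y \<le> K * QZ (snd y) then PM m * PXZ y else 0" "e m"]
    by simp
  then show ?thesis
    unfolding sum_filter_UNIV_prod by (simp add: case_prod_beta cong: if_cong)
qed

lemma Pjs_code_additive_channel_ge:
  fixes PXZ :: "('x::{ab_group_add, finite} \<times> 'z::finite) \<Rightarrow> real"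
    and PM :: "'m::finite \<Rightarrow> real" and QZ :: "'z \<Rightarrow> real"
  assumes "is_dist PXZ" and "is_dist PM" and "is_dist QZ" and "c > 0"
  shows "(\<Sum>(m, x, z) \<in> {(m, x, z). PM m * PXZ (x, z) \<le> c / real (card (UNIV :: 'x set)) * QZ z}.
            PM m * PXZ (x, z)) - c
         \<le> Pjs_code PM e d (\<lambda>x' (x, z). PXZ (x - x', z))"
proof -
  let ?N = "real (card (UNIV :: 'x set))"
  define W :: "'x \<Rightarrow> 'x \<times> 'z \<Rightarrow> real" where "W x' y = PXZ (fst y - x', snd y)" for x' y
  have W_eq: "(\<lambda>x' (x, z). PXZ (x - x', z)) = W"
    by (simp add: W_def fun_eq_iff)
  have "?N > 0" by (simp add: finite_UNIV_card_ge_0)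
  have PM: "\<And>m. PM m \<ge> 0" and PXZ: "\<And>p. PXZ p \<ge> 0" and QZ: "\<And>z. QZ z \<ge> 0"
    and QZ_sum: "(\<Sum>z\<in>UNIV. QZ z) = 1"
    using assms(1-3) unfolding is_dist_def by auto
  have "(\<Sum>(m, x, z) \<in> {(m, x, z). PM m * PXZ (x, z) \<le> c / ?N * QZ z}. PM m * PXZ (x, z))
      = (\<Sum>(m, y) \<in> {(m, y). PM m * W (e m) y \<le> c / ?N * QZ (snd y)}. PM m * W (e m) y)"
    unfolding W_def by (rule low_likelihood_mass_additive_channel[symmetric])
  also have "\<dots> \<le> Pjs_code PM e d W + c / ?N * (\<Sum>y\<in>(UNIV :: ('x \<times> 'z) set). QZ (snd y))"
    using \<open>c > 0\<close> by (intro Pjs_code_ge_low_likelihood_mass) (simp_all add: PM PXZ QZ W_def)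
  also have "\<dots> = Pjs_code PM e d W + c"
    using \<open>?N > 0\<close> by (simp add: sum_UNIV_prod QZ_sum)
  finally show ?thesis
    unfolding W_eq by linarith
qed

theorem mainTheorem7:
  fixes PXZ :: "('x::{ab_group_add, finite} \<times> 'z::finite) \<Rightarrow> real"
    and PM :: "'m::finite \<Rightarrow> real"
    and QZ :: "'z \<Rightarrow> real"
    and c :: real
  assumes "is_dist PXZ" and "is_dist PM" and "is_dist QZ" and "c > 0"
  shows "Pjs PM (\<lambda>x' (x, z). PXZ (x - x', z))
           \<ge> (\<Sum>(m, x, z) \<in> {(m, x, z). PM m * PXZ (x, z) \<le> c / real (card (UNIV :: 'x set)) * QZ z}.
                 PM m * PXZ (x, z)) - c"
  unfolding Pjs_def
  by (rule cINF_greatest) (simp, rule Pjs_code_additive_channel_ge[OF assms])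

end
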